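(* Let $z_0\in\mathbb{R}^n$ be a row vector with $z_0[i]\ge0$ for $i\in\mathcal{V}$, $z_0[(i,j)]=0$ for $(i,j)\in\mathcal{E}$, and $\sum_j z_0[j]>0$, and define $z_k=z_{k-1}M_k$ for $k\ge1$. Let $\mu_z$ satisfy $0<\mu_z\le\sum_j z_0[j]$, let $c=\min\{M[a,b]: M\in\mathcal{M},\,M[a,b]>0\}$, let $l$ be a positive integer such that for every $i\in\mathcal{V}$ there exist $l$ matrices in $\mathcal{M}$ (possibly repeated) whose product, in some order, has all entries of its column indexed by $i$ strictly positive, and set $\mu=\mu_z c^l/n$. Then for each $i\in\mathcal{V}$, with probability $1$, $z_k[i]\ge\mu$ for infinitely many $k$.
   Context: Let $\mathcal{G}=(\mathcal{V},\mathcal{E})$ be a strongly connected directed graph with $\mathcal{V}=\{1,\dots,m\}$, with a self-loop $(i,i)\in\mathcal{E}$ at every node. Let $\mathcal{O}_i=\{j:(i,j)\in\mathcal{E}\}$ and $D_i=|\mathcal{O}_i|$. At each time step $k\ge1$ each link $(i,j)\in\mathcal{E}$ is reliable with probability $q_{ij}\in(0,1]$, independently across links and across time steps; let $X_k[i,j]=1$ if $(i,j)$ is reliable at step $k$ and $0$ otherwise. Let $n=m+|\mathcal{E}|$ and index vector entries and rows/columns of $n\times n$ matrices by $\mathcal{V}\cup\mathcal{E}$. The random matrix $M_k$ is defined by: for $i\in\mathcal{V}$ and $(i,j)\in\mathcal{E}$, $M_k[i,j]=X_k[i,j]/D_i$ and $M_k[i,(i,j)]=(1-X_k[i,j])/D_i$,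 all other entries of row $i$ being $0$; for $(i,j)\in\mathcal{E}$, $M_k[(i,j),j]=X_k[i,j]$ and $M_k[(i,j),(i,j)]=1-X_k[i,j]$, all other entries of row $(i,j)$ being $0$. $\mathcal{M}$ denotes the finite set of all $2^{|\mathcal{E}|}$ matrices obtainable this way. *)

theory Defs
  imports "HOL-Probability.Probability"
begin

text \<open>Vertices are the elements of a finite type 'v (so m = CARD('v)); edges are a set
  E of ordered pairs.  Vector / matrix entries are indexed by 'v + ('v \<times> 'v):
  Inl i stands for the node i, Inr (i,j) for the link (i,j).  Only indices in
  idx E = V \<union> E are meaningful; vectors and matrices are functions on this type,
  and all sums range over idx E.\<close>

definition idx :: "('v \<times> 'v) set \<Rightarrow> ('v + 'v \<times> 'v) set" where
  "idx E = range Inl \<union> Inr ` E"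

definition outdeg :: "('v \<times> 'v) set \<Rightarrow> 'v \<Rightarrow> nat" where
  "outdeg E i = card {j. (i, j) \<in> E}"

text \<open>The matrix M determined by a reliability pattern X (X e = True iff link e reliable).\<close>
definition Mmat :: "('v \<times> 'v) set \<Rightarrow> ('v \<times> 'v \<Rightarrow> bool) \<Rightarrow> ('v + 'v \<times> 'v) \<Rightarrow> ('v + 'v \<times> 'v) \<Rightarrow> real" where
  "Mmat E X a b =
     (case a of
        Inl i \<Rightarrow>
          (case b of
             Inl j \<Rightarrow> (if (i, j) \<in> E \<and> X (i, j) then 1 / real (outdeg E i) else 0)
           | Inr e \<Rightarrow> (if e \<in> E \<and> fst e = i \<and> \<not> X e then 1 / real (outdeg E i) else 0))
      | Inr e \<Rightarrow>
          (if e \<in> E then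
             (case b of
                Inl j \<Rightarrow> (if j = snd e \<and> X e then 1 else 0)
              | Inr e' \<Rightarrow> (if e' = e \<and> \<not> X e then 1 else 0))
           else 0))"

definition Mset :: "('v \<times> 'v) set \<Rightarrow> (('v + 'v \<times> 'v) \<Rightarrow> ('v + 'v \<times> 'v) \<Rightarrow> real) set" where
  "Mset E = {Mmat E X | X. True}"

definition vecmat :: "('v \<times> 'v) set \<Rightarrow> (('v + 'v \<times> 'v) \<Rightarrow> real) \<Rightarrow> (('v + 'v \<times> 'v) \<Rightarrow> ('v + 'v \<times> 'v) \<Rightarrow> real) \<Rightarrow> ('v + 'v \<times> 'v) \<Rightarrow> real" where
  "vecmat E z M b = (\<Sum>a\<in>idx E. z a * M a b)"

definition matmul :: "('v \<times> 'v) set \<Rightarrow> (('v + 'v \<times> 'v) \<Rightarrow> ('v + 'v \<times> 'v) \<Rightarrow> real) \<Rightarrow> (('v + 'v \<times> 'v) \<Rightarrow> ('v + 'v \<times> 'v) \<Rightarrow> real) \<Rightarrow> ('v + 'v \<times> 'v) \<Rightarrow> ('v + 'v \<times> 'v) \<Rightarrow> real" where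
  "matmul E A B a b = (\<Sum>c\<in>idx E. A a c * B c b)"

fun matprod :: "('v \<times> 'v) set \<Rightarrow> (('v + 'v \<times> 'v) \<Rightarrow> ('v + 'v \<times> 'v) \<Rightarrow> real) list \<Rightarrow> ('v + 'v \<times> 'v) \<Rightarrow> ('v + 'v \<times> 'v) \<Rightarrow> real" where
  "matprod E [] = (\<lambda>a b. if a = b then 1 else 0)"
| "matprod E (A # As) = matmul E A (matprod E As)"

definition cmin :: "('v \<times> 'v) set \<Rightarrow> real" where
  "cmin E = Min {M a b | M a b. M \<in> Mset E \<and> a \<in> idx E \<and> b \<in> idx E \<and> M a b > 0}"

text \<open>Probability space of link reliabilities: \<omega> (k, e) = X_k[e] for k \<ge> 1, e \<in> E,
  independent Bernoulli(q e).\<close>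
definition Xprob :: "('v \<times> 'v) set \<Rightarrow> ('v \<times> 'v \<Rightarrow> real) \<Rightarrow> (nat \<times> ('v \<times> 'v) \<Rightarrow> bool) measure" where
  "Xprob E q = PiM ({1..} \<times> E) (\<lambda>ke. measure_pmf (bernoulli_pmf (q (snd ke))))"

fun zseq :: "('v \<times> 'v) set \<Rightarrow> (('v + 'v \<times> 'v) \<Rightarrow> real) \<Rightarrow> (nat \<times> ('v \<times> 'v) \<Rightarrow> bool) \<Rightarrow> nat \<Rightarrow> ('v + 'v \<times> 'v) \<Rightarrow> real" where
  "zseq E z0 \<omega> 0 = z0"
| "zseq E z0 \<omega> (Suc k) = vecmat E (zseq E z0 \<omega> k) (Mmat E (\<lambda>e. \<omega> (Suc k, e)))"

end

theory Submission
  imports Defs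
begin

text \<open>If every link is reliable during the steps \<open>k+1, ..., k+l\<close>, then \<open>z\<^sub>k\<^sub>+\<^sub>l = z\<^sub>k A\<^sup>l\<close> for
  the all-reliable matrix \<open>A\<close>. A product of \<open>l\<close> matrices of \<open>\<M>\<close> whose column \<open>i\<close> is positive
  can be shadowed by \<open>A\<^sup>l\<close>: a positive path through the buffer of a link \<open>(u, w)\<close> is followed
  by a path sitting at \<open>u\<close> or \<open>w\<close>, which may wait there thanks to the self-loops. Hence column
  \<open>i\<close> of \<open>A\<^sup>l\<close> is positive, so all its entries are at least \<open>c\<^sup>l\<close>. As \<open>z\<^sub>k\<close> is nonnegative and
  the matrices are row-stochastic, \<open>z\<^sub>k\<^sub>+\<^sub>l[i] \<ge> c\<^sup>l \<Sum>z\<^sub>0 \<ge> \<mu>\<close>, even without the factor \<open>1/n\<close>.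
  Disjoint blocks of \<open>l\<close> steps are independently all-reliable with probability
  \<open>(\<Prod>q)\<^sup>l > 0\<close>, so almost surely infinitely many of them are.\<close>

lemma Mmat_nonneg: "0 \<le> Mmat E X a b"
  unfolding Mmat_def by (auto split: sum.split)

lemma matprod_nonneg: "set Ms \<subseteq> Mset E \<Longrightarrow> 0 \<le> matprod E Ms a b"
proof (induction Ms arbitrary: a)
  case (Cons M Ms)
  then obtain X where "M = Mmat E X" by (auto simp: Mset_def)
  with Cons show ?case
    by (auto simp: matmul_def Mmat_nonneg intro!: sum_nonneg mult_nonneg_nonneg)
qed simp

lemma matmul_pos_iff:
  fixes E :: "('v::finite \<times> 'v) set"
  assumes "\<And>c. 0 \<le> A a c" and "\<And>c. 0 \<le> B c b"
  shows "0 < matmul E A B a b \<longleftrightarrow> (\<exists>c\<in>idx E. 0 < A a c \<and> 0 < B c b)"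
proof
  assume "0 < matmul E A B a b"
  then obtain c where "c \<in> idx E" "0 < A a c * B c b"
    unfolding matmul_def by (meson not_le sum_nonpos)
  then show "\<exists>c\<in>idx E. 0 < A a c \<and> 0 < B c b"
    using assms[of c] by (auto simp: zero_less_mult_iff)
next
  assume "\<exists>c\<in>idx E. 0 < A a c \<and> 0 < B c b"
  then obtain c where c: "c \<in> idx E" "0 < A a c" "0 < B c b" by blast
  then have "0 < A a c * B c b" by simp
  also have "A a c * B c b \<le> matmul E A B a b"
    unfolding matmul_def using c(1) assms
    by (intro member_le_sum mult_nonneg_nonneg) (auto simp: idx_def)
  finally show "0 < matmul E A B a b" .
qed

lemma finite_Mset: "finite (Mset (E :: ('v::finite \<times> 'v) set))"
proof -
  have "Mset E = range (Mmat E)" by (auto simp: Mset_def)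
  then show ?thesis by simp
qed

lemma finite_positive_entries:
  "finite {M a b | M a b. M \<in> Mset (E :: ('v::finite \<times> 'v) set) \<and> a \<in> idx E \<and> b \<in> idx E \<and> M a b > 0}"
proof (rule finite_subset)
  show "finite ((\<lambda>(M, a, b). M a b) ` (Mset E \<times> idx E \<times> idx E))"
    using finite_Mset by (intro finite_imageI finite_cartesian_product) (simp_all add: idx_def)
  show "{M a b | M a b. M \<in> Mset E \<and> a \<in> idx E \<and> b \<in> idx E \<and> M a b > 0}
    \<subseteq> (\<lambda>(M, a, b). M a b) ` (Mset E \<times> idx E \<times> idx E)"
  proof (rule subsetI, elim CollectE exE conjE)
    fix x M a b
    assume "x = M a b" "M \<in> Mset E" "a \<in> idx E" "b \<in> idx E"
    then show "x \<in> (\<lambda>(M, a, b). M a b) ` (Mset E \<times> idx E \<times> idx E)"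
      by (intro image_eqI[of _ _ "(M, a, b)"]) auto
  qed
qed

lemma
  fixes E :: "('v::finite \<times> 'v) set"
  assumes "M \<in> Mset E" "a \<in> idx E" "b \<in> idx E" "0 < M a b"
  shows cmin_le: "cmin E \<le> M a b"
    and cmin_pos: "0 < cmin E"
proof -
  let ?S = "{M a b | M a b. M \<in> Mset E \<and> a \<in> idx E \<and> b \<in> idx E \<and> M a b > 0}"
  have "M a b \<in> ?S"
    using assms by blast
  note * = finite_positive_entries this
  show "cmin E \<le> M a b" unfolding cmin_def using Min_le[OF *] .
  have "Min ?S \<in> ?S" using Min_in[OF *(1)] *(2) by blast
  then show "0 < cmin E" unfolding cmin_def by auto
qed

lemma matprod_pos_ge_cmin_power:
  fixes E :: "('v::finite \<times> 'v) set"
  assumes "set Ms \<subseteq> Mset E" "a \<in> idx E" "0 < matprod E Ms a b"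
  shows "cmin E ^ length Ms \<le> matprod E Ms a b"
  using assms
proof (induction Ms arbitrary: a)
  case Nil
  then show ?case by (simp split: if_splits)
next
  case (Cons M Ms)
  then have M: "M \<in> Mset E" and Ms: "set Ms \<subseteq> Mset E" by auto
  have M_nonneg: "\<And>c. 0 \<le> M a c" using M by (auto simp: Mset_def Mmat_nonneg)
  obtain c where c: "c \<in> idx E" "0 < M a c" "0 < matprod E Ms c b"
    using Cons.prems(3) by (auto simp: matmul_pos_iff M_nonneg matprod_nonneg[OF Ms])
  have "cmin E * cmin E ^ length Ms \<le> M a c * matprod E Ms c b"
    using cmin_le[OF M Cons.prems(2) c(1,2)] cmin_pos[OF M Cons.prems(2) c(1,2)]
      Cons.IH[OF Ms c(1,3)] by (intro mult_mono) auto
  also have "\<dots> \<le> matmul E M (matprod E Ms) a b"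
    unfolding matmul_def using c(1) M
    by (intro member_le_sum mult_nonneg_nonneg) (auto simp: M_nonneg matprod_nonneg[OF Ms] idx_def)
  finally show ?case by simp
qed

abbreviation Mreliable :: "('v \<times> 'v) set \<Rightarrow> ('v + 'v \<times> 'v) \<Rightarrow> ('v + 'v \<times> 'v) \<Rightarrow> real" where
  "Mreliable E \<equiv> Mmat E (\<lambda>_. True)"

lemma Mreliable_in_Mset: "Mreliable E \<in> Mset E"
  by (auto simp: Mset_def)

lemma set_replicate_Mreliable: "set (replicate n (Mreliable E)) \<subseteq> Mset E"
  by (auto simp: Mset_def)

lemma outdeg_pos:
  fixes E :: "('v::finite \<times> 'v) set"
  assumes "(u, w) \<in> E"
  shows "0 < outdeg E u"
  using assms unfolding outdeg_def by (auto simp: card_gt_0_iff)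

lemma Mreliable_edge_pos:
  fixes E :: "('v::finite \<times> 'v) set"
  assumes "(u, w) \<in> E"
  shows "0 < Mreliable E (Inl u) (Inl w)"
  using assms outdeg_pos[OF assms] by (simp add: Mmat_def)

lemma Mreliable_link_head:
  assumes "(u, w) \<in> E"
  shows "Mreliable E (Inr (u, w)) (Inl w) = 1"
  using assms by (simp add: Mmat_def)

lemma Mmat_pos_along_link:
  assumes "0 < Mmat E X a c"
  obtains u w where "(u, w) \<in> E" "a = Inl u \<or> a = Inr (u, w)" "c = Inl w \<or> c = Inr (u, w)"
  using assms by (auto simp: Mmat_def split: sum.splits if_splits)

definition tracks :: "('v \<times> 'v) set \<Rightarrow> ('v + 'v \<times> 'v) \<Rightarrow> ('v + 'v \<times> 'v) \<Rightarrow> bool" where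
  "tracks E s t \<longleftrightarrow> s = t \<or> (\<exists>u w. s = Inr (u, w) \<and> (u, w) \<in> E \<and> (t = Inl u \<or> t = Inl w))"

lemma tracks_step:
  fixes E :: "('v::finite \<times> 'v) set"
  assumes self_loops: "\<forall>u. (u, u) \<in> E"
    and "tracks E a t" and "0 < Mmat E X a c"
  obtains w where "0 < Mreliable E t (Inl w)" "tracks E c (Inl w)"
proof -
  obtain u w where uw: "(u, w) \<in> E" "a = Inl u \<or> a = Inr (u, w)" "c = Inl w \<or> c = Inr (u, w)"
    using assms(3) by (rule Mmat_pos_along_link)
  have "t = Inl u \<or> t = Inl w \<or> t = Inr (u, w)"
    using assms(2) uw(2) by (auto simp: tracks_def)
  then have "0 < Mreliable E t (Inl w)"
    using uw(1) self_loops by (auto simp: Mreliable_edge_pos Mreliable_link_head)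
  moreover have "tracks E c (Inl w)"
    using uw(1,3) by (auto simp: tracks_def)
  ultimately show thesis by (rule that)
qed

lemma tracks_matprod:
  fixes E :: "('v::finite \<times> 'v) set"
  assumes self_loops: "\<forall>u. (u, u) \<in> E"
  shows "set Ms \<subseteq> Mset E \<Longrightarrow> 0 < matprod E Ms a b \<Longrightarrow> tracks E a t \<Longrightarrow>
    \<exists>t'. tracks E b t' \<and> 0 < matprod E (replicate (length Ms) (Mreliable E)) t t'"
proof (induction Ms arbitrary: a t)
  case Nil
  then show ?case by (auto split: if_splits)
next
  case (Cons M Ms)
  then have M: "M \<in> Mset E" and Ms: "set Ms \<subseteq> Mset E" by auto
  then obtain X where X: "M = Mmat E X" by (auto simp: Mset_def)
  obtain c where c: "0 < M a c" "0 < matprod E Ms c b"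
    using Cons.prems(2) by (auto simp: matmul_pos_iff X Mmat_nonneg matprod_nonneg[OF Ms])
  obtain w where w: "0 < Mreliable E t (Inl w)" "tracks E c (Inl w)"
    using tracks_step[OF self_loops Cons.prems(3)] c(1) X by blast
  obtain t' where t': "tracks E b t'" "0 < matprod E (replicate (length Ms) (Mreliable E)) (Inl w) t'"
    using Cons.IH[OF Ms c(2) w(2)] by blast
  have "0 < matprod E (replicate (length (M # Ms)) (Mreliable E)) t t'"
    using w(1) t'(2)
    by (auto simp: matmul_pos_iff Mmat_nonneg matprod_nonneg[OF set_replicate_Mreliable] idx_def)
  with t'(1) show ?case by blast
qed

lemma Mreliable_power_column_ge:
  fixes E :: "('v::finite \<times> 'v) set"
  assumes self_loops: "\<forall>u. (u, u) \<in> E"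
    and "\<exists>Ms. length Ms = l \<and> set Ms \<subseteq> Mset E \<and> (\<forall>a\<in>idx E. matprod E Ms a (Inl i) > 0)"
    and a: "a \<in> idx E"
  shows "cmin E ^ l \<le> matprod E (replicate l (Mreliable E)) a (Inl i)"
proof -
  obtain Ms where Ms: "length Ms = l" "set Ms \<subseteq> Mset E" "0 < matprod E Ms a (Inl i)"
    using assms(2) a by blast
  obtain t' where "tracks E (Inl i) t'" "0 < matprod E (replicate l (Mreliable E)) a t'"
    using tracks_matprod[OF self_loops Ms(2,3), of a] Ms(1) by (auto simp: tracks_def)
  then have "0 < matprod E (replicate l (Mreliable E)) a (Inl i)"
    by (simp add: tracks_def)
  then show ?thesis
    using matprod_pos_ge_cmin_power[OF set_replicate_Mreliable a] by simp
qed

lemma vecmat_matmul: "vecmat E (vecmat E z A) B b = vecmat E z (matmul E A B) b"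
proof -
  have "vecmat E (vecmat E z A) B b = (\<Sum>a\<in>idx E. \<Sum>c\<in>idx E. z c * A c a * B a b)"
    unfolding vecmat_def by (simp add: sum_distrib_right)
  also have "\<dots> = (\<Sum>c\<in>idx E. \<Sum>a\<in>idx E. z c * A c a * B a b)"
    by (rule sum.swap)
  also have "\<dots> = vecmat E z (matmul E A B) b"
    unfolding vecmat_def matmul_def by (simp add: sum_distrib_left mult.assoc)
  finally show ?thesis .
qed

lemma vecmat_id:
  fixes E :: "('v::finite \<times> 'v) set"
  assumes "b \<in> idx E"
  shows "vecmat E z (\<lambda>a b. if a = b then 1 else 0) b = z b"
  using assms by (simp add: vecmat_def if_distrib[of "\<lambda>x. z _ * x"] cong: if_cong)

lemma Mmat_all_reliable: "\<forall>e\<in>E. X e \<Longrightarrow> Mmat E X = Mreliable E"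
  by (auto simp: Mmat_def fun_eq_iff split: sum.split)

lemma zseq_reliable_block:
  fixes E :: "('v::finite \<times> 'v) set"
  assumes "\<forall>j\<in>{1..n}. \<forall>e\<in>E. \<omega> (k + j, e)" and "b \<in> idx E"
  shows "zseq E z0 \<omega> (k + n) b = vecmat E (zseq E z0 \<omega> k) (matprod E (replicate n (Mreliable E))) b"
  using assms
proof (induction n arbitrary: k)
  case 0
  then show ?case by (simp add: vecmat_id)
next
  case (Suc n)
  have "\<forall>e\<in>E. \<omega> (Suc k, e)"
    using Suc.prems(1) by (metis Suc_eq_plus1 add.commute atLeastAtMost_iff le_add1 le_refl)
  from Mmat_all_reliable[OF this]
  have step: "zseq E z0 \<omega> (Suc k) = vecmat E (zseq E z0 \<omega> k) (Mreliable E)"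
    by simp
  have "\<forall>j\<in>{1..n}. \<forall>e\<in>E. \<omega> (Suc k + j, e)"
    using Suc.prems(1) by force
  then have "zseq E z0 \<omega> (Suc k + n) b =
      vecmat E (zseq E z0 \<omega> (Suc k)) (matprod E (replicate n (Mreliable E))) b"
    by (rule Suc.IH[OF _ Suc.prems(2)])
  also have "\<dots> = vecmat E (zseq E z0 \<omega> k) (matprod E (replicate (Suc n) (Mreliable E))) b"
    unfolding step by (simp add: vecmat_matmul)
  finally show ?case by simp
qed

lemma sum_idx:
  fixes E :: "('v::finite \<times> 'v) set"
  shows "sum f (idx E) = (\<Sum>v\<in>UNIV. f (Inl v)) + (\<Sum>e\<in>E. f (Inr e))"
proof -
  have "sum f (idx E) = sum f (range Inl) + sum f (Inr ` E)"
    unfolding idx_def by (rule sum.union_disjoint) auto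
  also have "sum f (range Inl) = (\<Sum>v\<in>UNIV. f (Inl v))"
    by (subst sum.reindex) (auto simp: inj_on_def)
  also have "sum f (Inr ` E) = (\<Sum>e\<in>E. f (Inr e))"
    by (subst sum.reindex) (auto simp: inj_on_def)
  finally show ?thesis .
qed

lemma Mmat_row_sum:
  fixes E :: "('v::finite \<times> 'v) set"
  assumes self_loops: "\<forall>u. (u, u) \<in> E" and a: "a \<in> idx E"
  shows "(\<Sum>b\<in>idx E. Mmat E X a b) = 1"
proof (cases a)
  case (Inl v)
  define Out where "Out = {j. (v, j) \<in> E}"
  define D where "D = real (outdeg E v)"
  have D: "D = real (card Out)" "0 < D"
    using outdeg_pos[of v v E] self_loops by (auto simp: D_def Out_def outdeg_def)
  have nodes: "(\<Sum>j\<in>UNIV. Mmat E X a (Inl j)) = (\<Sum>j\<in>Out. if X (v, j) then 1 / D else 0)"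
    by (rule sum.mono_neutral_cong_right) (auto simp: Mmat_def Inl D_def Out_def)
  have "(\<Sum>e\<in>E. Mmat E X a (Inr e)) = (\<Sum>e\<in>Pair v ` Out. Mmat E X a (Inr e))"
    by (rule sum.mono_neutral_right) (auto simp: Mmat_def Inl Out_def)
  also have "\<dots> = (\<Sum>j\<in>Out. if X (v, j) then 0 else 1 / D)"
    by (subst sum.reindex) (auto simp: inj_on_def Mmat_def Inl D_def Out_def intro!: sum.cong)
  finally have links: "(\<Sum>e\<in>E. Mmat E X a (Inr e)) = (\<Sum>j\<in>Out. if X (v, j) then 0 else 1 / D)" .
  have "(\<Sum>b\<in>idx E. Mmat E X a b) = (\<Sum>j\<in>Out. 1 / D)"
    unfolding sum_idx nodes links sum.distrib[symmetric] by (rule sum.cong) auto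
  also have "\<dots> = 1"
    using D by (auto simp: card_gt_0_iff)
  finally show ?thesis .
next
  case (Inr e)
  with a have "e \<in> E" by (auto simp: idx_def)
  then show ?thesis
    unfolding sum_idx by (cases "X e") (simp_all add: Mmat_def Inr)
qed

lemma vecmat_Mmat_sum:
  fixes E :: "('v::finite \<times> 'v) set"
  assumes self_loops: "\<forall>u. (u, u) \<in> E"
  shows "(\<Sum>b\<in>idx E. vecmat E z (Mmat E X) b) = (\<Sum>a\<in>idx E. z a)"
proof -
  have "(\<Sum>b\<in>idx E. vecmat E z (Mmat E X) b) = (\<Sum>a\<in>idx E. z a * (\<Sum>b\<in>idx E. Mmat E X a b))"
    unfolding vecmat_def by (subst sum.swap) (simp add: sum_distrib_left)
  also have "\<dots> = (\<Sum>a\<in>idx E. z a)"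
    by (rule sum.cong) (auto simp: Mmat_row_sum[OF self_loops])
  finally show ?thesis .
qed

lemma zseq_sum:
  fixes E :: "('v::finite \<times> 'v) set"
  assumes "\<forall>u. (u, u) \<in> E"
  shows "(\<Sum>b\<in>idx E. zseq E z0 \<omega> k b) = (\<Sum>a\<in>idx E. z0 a)"
  by (induction k) (simp_all add: vecmat_Mmat_sum[OF assms])

lemma zseq_nonneg:
  fixes E :: "('v::finite \<times> 'v) set"
  assumes "\<forall>v. 0 \<le> z0 (Inl v)" and "\<forall>e\<in>E. z0 (Inr e) = 0" and "a \<in> idx E"
  shows "0 \<le> zseq E z0 \<omega> k a"
  using assms(3)
proof (induction k arbitrary: a)
  case 0
  then show ?case using assms(1,2) by (auto simp: idx_def)
next
  case (Suc k)
  then show ?case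
    by (auto simp: vecmat_def intro!: sum_nonneg mult_nonneg_nonneg Mmat_nonneg)
qed

lemma zseq_after_reliable_block_ge:
  fixes E :: "('v::finite \<times> 'v) set"
  assumes self_loops: "\<forall>u. (u, u) \<in> E"
    and z0_nodes: "\<forall>v. 0 \<le> z0 (Inl v)" and z0_links: "\<forall>e\<in>E. z0 (Inr e) = 0"
    and column: "\<exists>Ms. length Ms = l \<and> set Ms \<subseteq> Mset E \<and> (\<forall>a\<in>idx E. matprod E Ms a (Inl i) > 0)"
    and reliable: "\<forall>j\<in>{1..l}. \<forall>e\<in>E. \<omega> (k + j, e)"
  shows "cmin E ^ l * (\<Sum>a\<in>idx E. z0 a) \<le> zseq E z0 \<omega> (k + l) (Inl i)"
proof -
  have "cmin E ^ l * (\<Sum>a\<in>idx E. z0 a) = (\<Sum>a\<in>idx E. zseq E z0 \<omega> k a * cmin E ^ l)"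
    unfolding sum_distrib_right[symmetric] zseq_sum[OF self_loops] by (rule mult.commute)
  also have "\<dots> \<le> (\<Sum>a\<in>idx E. zseq E z0 \<omega> k a * matprod E (replicate l (Mreliable E)) a (Inl i))"
    by (intro sum_mono mult_left_mono Mreliable_power_column_ge[OF self_loops column]
        zseq_nonneg[OF z0_nodes z0_links])
  also have "\<dots> = zseq E z0 \<omega> (k + l) (Inl i)"
    by (simp add: zseq_reliable_block[OF reliable] vecmat_def idx_def)
  finally show ?thesis .
qed

lemma indep_vars_PiM_components:
  assumes M: "\<And>i. prob_space (M i)"
  shows "prob_space.indep_vars (PiM I M) M (\<lambda>i \<omega>. \<omega> i) I"
proof -
  interpret P: prob_space "PiM I M" by (rule prob_space_PiM) (rule M)
  show ?thesis
  proof (cases "I = {}")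
    case True
    then show ?thesis unfolding P.indep_vars_def P.indep_sets_def by simp
  next
    case False
    have "distr (PiM I M) (PiM I M) (\<lambda>x. \<lambda>i\<in>I. x i) = distr (PiM I M) (PiM I M) (\<lambda>x. x)"
      by (rule distr_cong) (auto simp: space_PiM PiE_def extensional_restrict)
    also have "\<dots> = PiM I M"
      by (rule distr_id2) simp
    also have "\<dots> = PiM I (\<lambda>i. distr (PiM I M) (M i) (\<lambda>x. x i))"
      by (rule PiM_cong) (auto simp: distr_PiM_component M)
    finally show ?thesis
      by (subst P.indep_vars_iff_distr_eq_PiM'[OF False measurable_component_singleton]) simp_all
  qed
qed

lemma (in prob_space) AE_frequently_not_in_indep_events:
  fixes A :: "nat \<Rightarrow> 'a set"
  assumes indep: "indep_events A UNIV" and prob_le: "\<And>m. prob (A m) \<le> r" and "r < 1"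
  shows "AE x in M. \<exists>\<^sub>\<infinity>m. x \<notin> A m"
proof -
  have A: "\<And>m. A m \<in> events"
    using indep by (auto simp: indep_events_def)
  have "0 \<le> r"
    using prob_le[of 0] measure_nonneg[of M "A 0"] by linarith
  have null: "(\<Inter>m\<in>{N..}. A m) \<in> null_sets M" for N
  proof -
    have "prob (\<Inter>m\<in>{N..}. A m) \<le> r ^ Suc k" for k
    proof -
      have "prob (\<Inter>m\<in>{N..}. A m) \<le> prob (\<Inter>m\<in>{N..<N + Suc k}. A m)"
        using A by (intro finite_measure_mono) auto
      also have "\<dots> = (\<Prod>m\<in>{N..<N + Suc k}. prob (A m))"
        using indep by (auto simp: indep_events_def)
      also have "\<dots> \<le> (\<Prod>m\<in>{N..<N + Suc k}. r)"
        by (intro prod_mono) (simp add: prob_le)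
      finally show ?thesis by simp
    qed
    moreover have "(\<lambda>k. r ^ Suc k) \<longlonglongrightarrow> 0"
      using \<open>0 \<le> r\<close> \<open>r < 1\<close> by (intro LIMSEQ_Suc LIMSEQ_power_zero) auto
    ultimately have "prob (\<Inter>m\<in>{N..}. A m) \<le> 0"
      by (intro LIMSEQ_le_const) auto
    then show ?thesis
      using A by (auto simp: emeasure_eq_measure null_sets_def measure_le_0_iff)
  qed
  have "AE x in M. \<forall>N. \<exists>m\<ge>N. x \<notin> A m"
    unfolding AE_all_countable by (intro allI AE_I'[OF null]) auto
  then show ?thesis
    by (simp add: INFM_nat_le)
qed

lemma indep_events_bernoulli_PiM_not_all:
  fixes K :: "nat \<Rightarrow> 'i set" and p :: "'i \<Rightarrow> real"
  defines "M \<equiv> \<lambda>i. measure_pmf (bernoulli_pmf (p i))"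
  assumes K_sub: "\<And>m. K m \<subseteq> I" and K_fin: "\<And>m. finite (K m)" and K_disj: "disjoint_family K"
  shows "prob_space.indep_events (PiM I M) (\<lambda>m. {\<omega> \<in> space (PiM I M). \<not> (\<forall>i\<in>K m. \<omega> i)}) UNIV"
proof -
  have M_prob: "\<And>i. prob_space (M i)"
    by (simp add: M_def prob_space_measure_pmf)
  interpret P: prob_space "PiM I M" by (rule prob_space_PiM) (rule M_prob)
  have indep: "P.indep_vars (\<lambda>m. PiM (K m) M) (\<lambda>m \<omega>. restrict \<omega> (K m)) UNIV"
    using P.indep_vars_restrict[OF indep_vars_PiM_components[OF M_prob] K_sub K_disj] by simp
  have "{f \<in> space (PiM (K m) M). \<not> (\<forall>i\<in>K m. f i)} \<in> sets (PiM (K m) M)" for m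
  proof -
    have "Measurable.pred (PiM (K m) M) (\<lambda>f. f i)" if "i \<in> K m" for i
      unfolding pred_def using measurable_component_singleton[OF that, of M]
      by (simp add: M_def measurable_pmf_measure1)
    then have "Measurable.pred (PiM (K m) M) (\<lambda>f. \<not> (\<forall>i\<in>K m. f i))"
      by (intro pred_intros_logic pred_intros_finite K_fin) auto
    then show ?thesis by (rule predE)
  qed
  then show ?thesis
    using P.indep_eventsI_indep_vars[OF indep, of "\<lambda>m f. \<not> (\<forall>i\<in>K m. f i)"] by simp
qed

lemma measure_bernoulli_PiM_all:
  fixes p :: "'i \<Rightarrow> real"
  defines "M \<equiv> \<lambda>i. measure_pmf (bernoulli_pmf (p i))"
  assumes "J \<subseteq> I" "finite J" and p: "\<And>i. i \<in> J \<Longrightarrow> 0 \<le> p i \<and> p i \<le> 1"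
  shows "measure (PiM I M) {\<omega> \<in> space (PiM I M). \<forall>i\<in>J. \<omega> i} = (\<Prod>i\<in>J. p i)"
proof -
  interpret product_prob_space M I
    by (rule product_prob_spaceI) (simp add: M_def prob_space_measure_pmf)
  have "emeasure (PiM I M) {\<omega> \<in> space (PiM I M). \<forall>i\<in>J. \<omega> i \<in> {True}} = (\<Prod>i\<in>J. emeasure (M i) {True})"
    by (rule emeasure_PiM_Collect) (auto simp: assms M_def)
  also have "\<dots> = (\<Prod>i\<in>J. ennreal (p i))"
    by (rule prod.cong) (auto simp: M_def emeasure_pmf_single p)
  also have "\<dots> = ennreal (\<Prod>i\<in>J. p i)"
    by (rule prod_ennreal) (simp add: p)
  finally show ?thesis
    using p by (simp add: measure_def prod_nonneg)
qed

lemma disjoint_family_blocks: "disjoint_family (\<lambda>m::nat. {m * Suc l + 1 .. m * Suc l + l} \<times> E)"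
proof -
  have "m * Suc l + l < n * Suc l" if "m < n" for m n
    using mult_le_mono1[of "Suc m" n "Suc l"] that by simp
  then show ?thesis
    unfolding disjoint_family_on_def by (fastforce simp: nat_neq_iff)
qed

lemma AE_frequently_reliable_block:
  fixes E :: "('v \<times> 'v) set" and q :: "'v \<times> 'v \<Rightarrow> real"
  assumes "finite E" and q_range: "\<forall>e\<in>E. 0 < q e \<and> q e \<le> 1"
  shows "AE \<omega> in Xprob E q. \<exists>\<^sub>\<infinity>k. \<forall>j\<in>{1..l}. \<forall>e\<in>E. \<omega> (k + j, e)"
proof -
  interpret P: prob_space "Xprob E q"
    unfolding Xprob_def by (intro prob_space_PiM prob_space_measure_pmf)
  \<comment> \<open>Blocks start every \<open>Suc l\<close> steps, so they are disjoint and \<open>m \<mapsto> m * Suc l\<close> is injective even for \<open>l = 0\<close>.\<close>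
  define K where "K m = {m * Suc l + 1 .. m * Suc l + l} \<times> E" for m
  have K_sub: "K m \<subseteq> {1..} \<times> E" for m
    by (auto simp: K_def)
  have K_fin: "finite (K m)" for m
    using \<open>finite E\<close> by (simp add: K_def)
  have K_disj: "disjoint_family K"
    unfolding K_def by (rule disjoint_family_blocks)
  define F where "F m = {\<omega> \<in> space (Xprob E q). \<not> (\<forall>ke\<in>K m. \<omega> ke)}" for m
  have F_indep: "P.indep_events F UNIV"
    using indep_events_bernoulli_PiM_not_all[OF K_sub K_fin K_disj, of "\<lambda>ke. q (snd ke)"]
    by (simp add: F_def[abs_def] Xprob_def)
  define p where "p = (\<Prod>e\<in>E. q e) ^ l"
  have "0 < p"
    using q_range unfolding p_def by (intro zero_less_power prod_pos) auto
  have "P.prob (F m) = 1 - p" for m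
  proof -
    have "P.prob {\<omega> \<in> space (Xprob E q). \<forall>ke\<in>K m. \<omega> ke} = (\<Prod>ke\<in>K m. q (snd ke))"
      unfolding Xprob_def using q_range
      by (intro measure_bernoulli_PiM_all K_sub K_fin) (auto simp: K_def less_imp_le)
    also have "\<dots> = (\<Prod>j\<in>{m * Suc l + 1 .. m * Suc l + l}. \<Prod>e\<in>E. q e)"
      unfolding K_def by (subst prod.cartesian_product) (simp add: case_prod_beta)
    also have "\<dots> = p"
      by (simp add: p_def)
    moreover have "space (Xprob E q) - F m = {\<omega> \<in> space (Xprob E q). \<forall>ke\<in>K m. \<omega> ke}"
      by (auto simp: F_def)
    moreover have "F m \<in> P.events"
      using F_indep by (auto simp: P.indep_events_def)
    ultimately show ?thesis
      using P.prob_compl[of "F m"] by simp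
  qed
  then have "AE \<omega> in Xprob E q. \<exists>\<^sub>\<infinity>m. \<omega> \<notin> F m"
    using \<open>0 < p\<close> by (intro P.AE_frequently_not_in_indep_events[OF F_indep, of "1 - p"]) auto
  then have "AE \<omega> in Xprob E q. \<exists>\<^sub>\<infinity>m. \<forall>j\<in>{1..l}. \<forall>e\<in>E. \<omega> (m * Suc l + j, e)"
    using AE_space by eventually_elim (auto simp: F_def K_def elim!: INFM_mono)
  then show ?thesis
  proof (rule eventually_mono)
    fix \<omega> :: "nat \<times> ('v \<times> 'v) \<Rightarrow> bool"
    assume "\<exists>\<^sub>\<infinity>m. \<forall>j\<in>{1..l}. \<forall>e\<in>E. \<omega> (m * Suc l + j, e)"
    then show "\<exists>\<^sub>\<infinity>k. \<forall>j\<in>{1..l}. \<forall>e\<in>E. \<omega> (k + j, e)"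
      by (rule INFM_inj[where P = "\<lambda>k. \<forall>j\<in>{1..l}. \<forall>e\<in>E. \<omega> (k + j, e)"])
        (simp add: inj_on_def del: mult_Suc_right)
  qed
qed

theorem lemma4:
  fixes E :: "('v::finite \<times> 'v) set"
    and q :: "'v \<times> 'v \<Rightarrow> real"
    and z0 :: "('v + 'v \<times> 'v) \<Rightarrow> real"
    and mu_z :: real
    and l :: nat
    and i :: 'v
  assumes strongly_connected: "\<forall>u v. (u, v) \<in> E\<^sup>*"
    and self_loops: "\<forall>u. (u, u) \<in> E"
    and q_range: "\<forall>e\<in>E. 0 < q e \<and> q e \<le> 1"
    and z0_nodes: "\<forall>v. z0 (Inl v) \<ge> 0"
    and z0_links: "\<forall>e\<in>E. z0 (Inr e) = 0"
    and z0_sum: "(\<Sum>a\<in>idx E. z0 a) > 0"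
    and mu_z_pos: "0 < mu_z"
    and mu_z_le: "mu_z \<le> (\<Sum>a\<in>idx E. z0 a)"
    and l_pos: "l > 0"
    and l_prop: "\<forall>v. \<exists>Ms. length Ms = l \<and> set Ms \<subseteq> Mset E \<and>
                       (\<forall>a\<in>idx E. matprod E Ms a (Inl v) > 0)"
  shows "AE \<omega> in Xprob E q.
           (\<exists>\<^sub>\<infinity>k. zseq E z0 \<omega> k (Inl i) \<ge> mu_z * cmin E ^ l / real (card (idx E)))"
proof -
  have c_pos: "0 < cmin E"
    using cmin_pos[OF Mreliable_in_Mset _ _ Mreliable_edge_pos[of i i]] self_loops
    by (simp add: idx_def)
  have "1 \<le> card (idx E)"
    by (simp add: idx_def Suc_le_eq card_gt_0_iff)
  then have "1 \<le> real (card (idx E))"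
    by simp
  moreover have "0 \<le> mu_z * cmin E ^ l"
    using mu_z_pos c_pos by simp
  ultimately have "mu_z * cmin E ^ l / real (card (idx E)) \<le> mu_z * cmin E ^ l"
    by (simp add: divide_le_eq mult_le_cancel_left1)
  also have "\<dots> \<le> cmin E ^ l * (\<Sum>a\<in>idx E. z0 a)"
    using mu_z_le c_pos by (simp add: mult.commute[of "cmin E ^ l"] mult_right_mono)
  finally have mu_le: "mu_z * cmin E ^ l / real (card (idx E)) \<le> cmin E ^ l * (\<Sum>a\<in>idx E. z0 a)" .
  have "AE \<omega> in Xprob E q. \<exists>\<^sub>\<infinity>k. \<forall>j\<in>{1..l}. \<forall>e\<in>E. \<omega> (k + j, e)"
    using q_range by (intro AE_frequently_reliable_block) simp_all
  then show ?thesis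
  proof (rule eventually_mono)
    fix \<omega> :: "nat \<times> ('v \<times> 'v) \<Rightarrow> bool"
    let ?bound = "\<lambda>k. mu_z * cmin E ^ l / real (card (idx E)) \<le> zseq E z0 \<omega> k (Inl i)"
    assume "\<exists>\<^sub>\<infinity>k. \<forall>j\<in>{1..l}. \<forall>e\<in>E. \<omega> (k + j, e)"
    then have "\<exists>\<^sub>\<infinity>k. ?bound (k + l)"
      by (rule INFM_mono) (use mu_le zseq_after_reliable_block_ge[OF self_loops z0_nodes z0_links
            l_prop[rule_format, of i]] in fastforce)
    then show "\<exists>\<^sub>\<infinity>k. ?bound k"
      by (rule INFM_inj[where P = ?bound]) (simp add: inj_on_def)
  qed
qed

end
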